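(* Let $m,n\geq 2$. If $S$ is a $\{2\}$-resolving set of the rook's graph $K_m\Box K_n$, then every quadruple of $K_m\Box K_n$ contains at least one element of $S$.
   Context: $K_m\Box K_n$ has vertices $av$ with $a\in V(K_m)$, $v\in V(K_n)$; distinct $av,bu$ are adjacent iff $a=b$ or $u=v$. A quadruple is a set $\{av,au,bv,bu\}$ with $a\neq b$ in $V(K_m)$ and $u\neq v$ in $V(K_n)$. $d$ is the shortest-path distance, $d(s,X)=\min_{x\in X}d(s,x)$, $\mathcal{D}_S(X)=(d(s_1,X),\dots,d(s_k,X))$ for $S=\{s_1,\dots,s_k\}$. $S$ is a $\{2\}$-resolving set if $\mathcal{D}_S(X)\neq\mathcal{D}_S(Y)$ for all distinct nonempty vertex sets $X,Y$ with $|X|,|Y|\leq 2$. *)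

theory Defs
  imports Main
begin

definition rook_vertices :: "nat \<Rightarrow> nat \<Rightarrow> (nat \<times> nat) set" where
  "rook_vertices m n = {0..<m} \<times> {0..<n}"

definition rook_adj :: "nat \<times> nat \<Rightarrow> nat \<times> nat \<Rightarrow> bool" where
  "rook_adj x y \<longleftrightarrow> x \<noteq> y \<and> (fst x = fst y \<or> snd x = snd y)"

definition rook_walk :: "nat \<Rightarrow> nat \<Rightarrow> (nat \<times> nat) list \<Rightarrow> bool" where
  "rook_walk m n p \<longleftrightarrow> p \<noteq> [] \<and> set p \<subseteq> rook_vertices m n \<and>
     (\<forall>i. Suc i < length p \<longrightarrow> rook_adj (p ! i) (p ! Suc i))"

definition rook_dist :: "nat \<Rightarrow> nat \<Rightarrow> nat \<times> nat \<Rightarrow> nat \<times> nat \<Rightarrow> nat" where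
  "rook_dist m n x y = (LEAST k. \<exists>p. rook_walk m n p \<and> hd p = x \<and> last p = y \<and> length p = Suc k)"

definition rook_set_dist :: "nat \<Rightarrow> nat \<Rightarrow> nat \<times> nat \<Rightarrow> (nat \<times> nat) set \<Rightarrow> nat" where
  "rook_set_dist m n s X = Min ((rook_dist m n s) ` X)"

text \<open>{2}-resolving set: distance vectors distinguish all distinct nonempty
  vertex sets of size at most 2. Comparing the vectors D_S(X), D_S(Y) is
  comparing the functions s \<mapsto> d(s,X) on S.\<close>
definition two_resolving :: "nat \<Rightarrow> nat \<Rightarrow> (nat \<times> nat) set \<Rightarrow> bool" where
  "two_resolving m n S \<longleftrightarrow> S \<subseteq> rook_vertices m n \<and>
     (\<forall>X Y. X \<subseteq> rook_vertices m n \<longrightarrow> Y \<subseteq> rook_vertices m n \<longrightarrow>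
        X \<noteq> {} \<longrightarrow> Y \<noteq> {} \<longrightarrow> card X \<le> 2 \<longrightarrow> card Y \<le> 2 \<longrightarrow> X \<noteq> Y \<longrightarrow>
        (\<exists>s\<in>S. rook_set_dist m n s X \<noteq> rook_set_dist m n s Y))"

definition quadruple :: "nat \<Rightarrow> nat \<Rightarrow> (nat \<times> nat) set \<Rightarrow> bool" where
  "quadruple m n Q \<longleftrightarrow> (\<exists>a b u v. a < m \<and> b < m \<and> u < n \<and> v < n \<and> a \<noteq> b \<and> u \<noteq> v \<and>
      Q = {(a,v),(a,u),(b,v),(b,u)})"

end

theory Submission
  imports Defs
begin

text \<open>A vertex s outside a quadruple has distance 1 to a set of vertices
  if it shares a row or a column with one of them, and distance 2 otherwise. The two
  diagonals of the quadruple cover the same two rows and the same two columns, so every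
  vertex outside the quadruple sees both diagonals at the same distance; a resolving
  set must therefore meet the quadruple.\<close>

lemma rook_walk_length_one_hd_eq_last:
  assumes "rook_walk m n p" "length p = 1"
  shows "hd p = last p"
  using assms by (cases p) auto

lemma rook_walk_length_two_adj:
  assumes "rook_walk m n p" "length p = 2"
  shows "rook_adj (hd p) (last p)"
proof -
  obtain x y where "p = [x, y]"
    using assms(2) by (metis One_nat_def Suc_1 length_0_conv length_Suc_conv)
  with assms(1) show ?thesis
    unfolding rook_walk_def by (auto dest: spec[of _ 0])
qed

lemma rook_dist_eq:
  assumes "x \<in> rook_vertices m n" "y \<in> rook_vertices m n"
  shows "rook_dist m n x y =
    (if x = y then 0 else if fst x = fst y \<or> snd x = snd y then 1 else 2)"
proof -
  define walk_of_length where "walk_of_length k \<longleftrightarrow>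
    (\<exists>p. rook_walk m n p \<and> hd p = x \<and> last p = y \<and> length p = Suc k)" for k
  have dist: "rook_dist m n x y = (LEAST k. walk_of_length k)"
    unfolding rook_dist_def walk_of_length_def ..
  have walk_if_eq: "walk_of_length 0" if "x = y"
    unfolding walk_of_length_def using assms that
    by (intro exI[of _ "[x]"]) (auto simp: rook_walk_def)
  have walk_if_line: "walk_of_length 1" if "x \<noteq> y" "fst x = fst y \<or> snd x = snd y"
    unfolding walk_of_length_def using assms that
    by (intro exI[of _ "[x, y]"]) (auto simp: rook_walk_def rook_adj_def less_Suc_eq)
  have walk_via_corner: "walk_of_length 2" if "fst x \<noteq> fst y" "snd x \<noteq> snd y"
  proof -
    have "(fst x, snd y) \<in> rook_vertices m n"
      using assms by (auto simp: rook_vertices_def)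
    then show ?thesis
      unfolding walk_of_length_def using assms that
      by (intro exI[of _ "[x, (fst x, snd y), y]"])
         (auto simp: rook_walk_def rook_adj_def less_Suc_eq prod_eq_iff)
  qed
  have no_walk_0: "\<not> walk_of_length 0" if "x \<noteq> y"
    using that rook_walk_length_one_hd_eq_last unfolding walk_of_length_def by fastforce
  have no_walk_1: "\<not> walk_of_length 1" if "fst x \<noteq> fst y" "snd x \<noteq> snd y"
    using that rook_walk_length_two_adj unfolding walk_of_length_def
    by (fastforce simp: rook_adj_def)
  consider "x = y" | "x \<noteq> y" "fst x = fst y \<or> snd x = snd y"
    | "fst x \<noteq> fst y" "snd x \<noteq> snd y"
    by fastforce
  then show ?thesis
  proof cases
    case 1
    then show ?thesis
      unfolding dist using walk_if_eq by (auto intro: Least_equality)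
  next
    case 2
    then have "(LEAST k. walk_of_length k) = 1"
    proof (intro Least_equality)
      fix k assume "walk_of_length k"
      with 2 no_walk_0 show "1 \<le> k" by (cases k) auto
    qed (rule walk_if_line)
    with 2 show ?thesis
      unfolding dist by simp
  next
    case 3
    then have "(LEAST k. walk_of_length k) = 2"
    proof (intro Least_equality)
      fix k assume "walk_of_length k"
      with 3 no_walk_0 no_walk_1 show "2 \<le> k"
        by (cases "k < 2") (auto simp: less_2_cases_iff)
    qed (rule walk_via_corner)
    with 3 show ?thesis
      unfolding dist by (auto simp: prod_eq_iff)
  qed
qed

lemma rook_set_dist_outside:
  assumes "s \<in> rook_vertices m n" "X \<subseteq> rook_vertices m n" "finite X" "X \<noteq> {}"
    and "s \<notin> X"
  shows "rook_set_dist m n s X = (if fst s \<in> fst ` X \<or> snd s \<in> snd ` X then 1 else 2)"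
proof -
  have dist: "rook_dist m n s x = (if fst s = fst x \<or> snd s = snd x then 1 else 2)"
    if "x \<in> X" for x
  proof -
    have "s \<noteq> x" using that assms(5) by blast
    with that assms(1,2) show ?thesis by (simp add: rook_dist_eq subsetD)
  qed
  show ?thesis
  proof (cases "fst s \<in> fst ` X \<or> snd s \<in> snd ` X")
    case True
    then obtain x where "x \<in> X" "fst s = fst x \<or> snd s = snd x" by blast
    then have "1 \<in> rook_dist m n s ` X" using dist by (simp add: rev_image_eqI)
    moreover have "\<forall>d \<in> rook_dist m n s ` X. 1 \<le> d" using dist by auto
    ultimately have "Min (rook_dist m n s ` X) = 1"
      using assms(3) by (intro Min_eqI) auto
    with True show ?thesis
      unfolding rook_set_dist_def by simp
  next
    case False
    then have "rook_dist m n s x = 2" if "x \<in> X" for x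
      using dist that by (auto simp: rev_image_eqI)
    then have "rook_dist m n s ` X = (\<lambda>_. 2) ` X"
      by (simp cong: image_cong)
    also have "\<dots> = {2}"
      using assms(4) by (simp add: image_constant_conv)
    finally show ?thesis
      using False unfolding rook_set_dist_def by simp
  qed
qed

lemma rook_set_dist_diagonals_eq:
  assumes "{(a, v), (a, u), (b, v), (b, u)} \<subseteq> rook_vertices m n"
    and "s \<in> rook_vertices m n" "s \<notin> {(a, v), (a, u), (b, v), (b, u)}"
  shows "rook_set_dist m n s {(a, v), (b, u)} = rook_set_dist m n s {(a, u), (b, v)}"
proof -
  have "rook_set_dist m n s {(a, v), (b, u)} =
      (if fst s \<in> {a, b} \<or> snd s \<in> {u, v} then 1 else 2)"
    using assms rook_set_dist_outside[of s m n "{(a, v), (b, u)}"] by auto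
  moreover have "rook_set_dist m n s {(a, u), (b, v)} =
      (if fst s \<in> {a, b} \<or> snd s \<in> {u, v} then 1 else 2)"
    using assms rook_set_dist_outside[of s m n "{(a, u), (b, v)}"] by auto
  ultimately show ?thesis by simp
qed

theorem mainTheorem10:
  fixes m n :: nat and S :: "(nat \<times> nat) set"
  assumes "m \<ge> 2" and "n \<ge> 2"
    and "two_resolving m n S"
    and "quadruple m n Q"
  shows "Q \<inter> S \<noteq> {}"
proof
  assume disjoint: "Q \<inter> S = {}"
  obtain a b u v where "a < m" "b < m" "u < n" "v < n" "a \<noteq> b" "u \<noteq> v"
    and Q: "Q = {(a, v), (a, u), (b, v), (b, u)}"
    using assms(4) unfolding quadruple_def by blast
  then have Q_vertices: "Q \<subseteq> rook_vertices m n"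
    by (auto simp: rook_vertices_def)
  let ?X = "{(a, v), (b, u)}" and ?Y = "{(a, u), (b, v)}"
  have "?X \<subseteq> rook_vertices m n" "?Y \<subseteq> rook_vertices m n"
    using Q_vertices unfolding Q by auto
  moreover have "?X \<noteq> ?Y"
    using \<open>a \<noteq> b\<close> \<open>u \<noteq> v\<close> by (auto simp: doubleton_eq_iff)
  moreover have "card ?X \<le> 2" "card ?Y \<le> 2"
    by (simp_all add: card_insert_if)
  ultimately obtain s where "s \<in> S"
    and "rook_set_dist m n s ?X \<noteq> rook_set_dist m n s ?Y"
    using assms(3) unfolding two_resolving_def by blast
  moreover have "s \<in> rook_vertices m n" "s \<notin> Q"
    using \<open>s \<in> S\<close> assms(3) disjoint unfolding two_resolving_def by auto
  ultimately show False
    using rook_set_dist_diagonals_eq[of a v u b m n s] Q_vertices unfolding Q by simp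
qed

end
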